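(* Let $K,N$ be symmetric homogeneous stable means and $M$ a symmetric homogeneous mean, all having symmetric asymptotic expansions with coefficients $(a^K_n),(a^N_n),(a^M_n)$. If $M$ is simultaneously $(K,N)$-stabilized and $(N,K)$-stabilized, then either $a^K_1=a^N_1$, or $a^K_1+a^N_1=-1$. In the first case $a^M_1=a^K_1=a^N_1$ and $a^M_2=\frac16a^M_1(1+a^M_1)(1-4a^M_1)$; in the second case $a^M_1=-\frac12$ and $a^M_2=-\frac18$.
   Context: A bi-variate mean is $M:(0,\infty)^2\to(0,\infty)$ with $\min\le M\le\max$; symmetric and homogeneous (degree 1). $M$ is stable if $M(s,t)=M\big(M(s,M(s,t)),M(M(s,t),t)\big)$. For stable means $K,N$, $M$ is $(K,N)$-stabilized if $M(s,t)=K\big(N(s,M(s,t)),N(M(s,t),t)\big)$ for all $s,t>0$. A mean has a symmetric asymptotic expansion with coefficients $(a_n)$ if for every fixed real $t$ and $N\ge0$, $M(x-t,x+t)=\sum_{n=0}^Na_nt^{2n}x^{-2n+1}+o(x^{-2N+1})$ as $x\to\infty$. *)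

theory Defs
  imports "HOL-Analysis.Analysis" "HOL-Library.Landau_Symbols"
begin

definition is_mean :: "(real \<Rightarrow> real \<Rightarrow> real) \<Rightarrow> bool" where
  "is_mean M \<longleftrightarrow> (\<forall>s>0. \<forall>t>0. M s t > 0 \<and> min s t \<le> M s t \<and> M s t \<le> max s t)"

definition symmetric_mean :: "(real \<Rightarrow> real \<Rightarrow> real) \<Rightarrow> bool" where
  "symmetric_mean M \<longleftrightarrow> (\<forall>s>0. \<forall>t>0. M s t = M t s)"

definition homogeneous_mean :: "(real \<Rightarrow> real \<Rightarrow> real) \<Rightarrow> bool" where
  "homogeneous_mean M \<longleftrightarrow> (\<forall>l>0. \<forall>s>0. \<forall>t>0. M (l * s) (l * t) = l * M s t)"

definition stable_mean :: "(real \<Rightarrow> real \<Rightarrow> real) \<Rightarrow> bool" where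
  "stable_mean M \<longleftrightarrow> (\<forall>s>0. \<forall>t>0. M s t = M (M s (M s t)) (M (M s t) t))"

definition stabilized :: "(real \<Rightarrow> real \<Rightarrow> real) \<Rightarrow> (real \<Rightarrow> real \<Rightarrow> real) \<Rightarrow>
    (real \<Rightarrow> real \<Rightarrow> real) \<Rightarrow> bool" where
  "stabilized K N M \<longleftrightarrow> (\<forall>s>0. \<forall>t>0. M s t = K (N s (M s t)) (N (M s t) t))"

definition sym_asymp_expansion :: "(real \<Rightarrow> real \<Rightarrow> real) \<Rightarrow> (nat \<Rightarrow> real) \<Rightarrow> bool" where
  "sym_asymp_expansion M a \<longleftrightarrow>
     (\<forall>t::real. \<forall>N::nat.
        (\<lambda>x. M (x - t) (x + t) - (\<Sum>n\<le>N. a n * t ^ (2 * n) * x powr (1 - 2 * real n)))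
          \<in> o[at_top](\<lambda>x. x powr (1 - 2 * real N)))"

end

(*
  By homogeneity a mean P is determined by its profile x \<mapsto> P(1 - x, 1 + x), and the symmetric
  asymptotic expansion of P is the same thing as the Taylor expansion
  1 + a\<^sub>1 x\<^sup>2 + a\<^sub>2 x\<^sup>4 + o(x\<^sup>4) of the profile at 0.  The stabilization identity
  M = K(N(s, M), N(M, t)) becomes a functional equation between profiles; comparing the
  coefficients of x\<^sup>2 and x\<^sup>4 gives 2 a\<^sup>M\<^sub>1 = a\<^sup>K\<^sub>1 + a\<^sup>N\<^sub>1 and an expression for a\<^sup>M\<^sub>2.  A stable mean
  is stabilized by itself, which ties a\<^sub>2 to a\<^sub>1 for K and N.  The two expressions for a\<^sup>M\<^sub>2
  coming from the (K,N)- and the (N,K)-stabilization differ by a multiple of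
  (a\<^sup>N\<^sub>1 - a\<^sup>K\<^sub>1)(2 a\<^sup>M\<^sub>1 + 1)\<^sup>2, which splits the conclusion into its two cases.
*)

theory Submission
  imports Defs
begin

text \<open>\<open>jet4 g c0 c1 c2 c3 c4\<close>: \<open>g h = c0 + c1 h + \<dots> + c4 h\<^sup>4 + o(h\<^sup>4)\<close> as \<open>h \<rightarrow> 0\<close>;
  the value \<open>g 0\<close> is irrelevant.\<close>

definition jet4 :: "(real \<Rightarrow> real) \<Rightarrow> real \<Rightarrow> real \<Rightarrow> real \<Rightarrow> real \<Rightarrow> real \<Rightarrow> bool" where
  "jet4 g c0 c1 c2 c3 c4 \<longleftrightarrow>
     ((\<lambda>h. (g h - (c0 + c1*h + c2*h^2 + c3*h^3 + c4*h^4)) / h^4) \<longlongrightarrow> 0) (at 0)"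

lemma jet4_cong:
  assumes "jet4 g c0 c1 c2 c3 c4" "\<forall>\<^sub>F h in at 0. g h = f h"
    and "c0 = d0" "c1 = d1" "c2 = d2" "c3 = d3" "c4 = d4"
  shows "jet4 f d0 d1 d2 d3 d4"
  using assms(1) unfolding jet4_def assms(3-7)
  by (rule Lim_transform_eventually) (use assms(2) in \<open>auto elim: eventually_mono\<close>)

lemma jet4_remainderE:
  assumes "jet4 g c0 c1 c2 c3 c4"
  obtains r where "(r \<longlongrightarrow> 0) (at 0)"
    and "\<And>h. h \<noteq> 0 \<Longrightarrow> g h = c0 + c1*h + c2*h^2 + c3*h^3 + c4*h^4 + h^4 * r h"
  using assms unfolding jet4_def by (rule that) auto

lemma jet4_remainderI:
  assumes "(r \<longlongrightarrow> 0) (at 0)"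
    and "\<And>h. h \<noteq> 0 \<Longrightarrow> g h = c0 + c1*h + c2*h^2 + c3*h^3 + c4*h^4 + h^4 * r h"
  shows "jet4 g c0 c1 c2 c3 c4"
proof -
  have "\<forall>\<^sub>F h in at 0. r h = (g h - (c0 + c1*h + c2*h^2 + c3*h^3 + c4*h^4)) / h^4"
    by (simp add: eventually_at_filter assms(2))
  with assms(1) show ?thesis
    unfolding jet4_def by (rule Lim_transform_eventually)
qed

lemma jet4_tendsto:
  assumes "jet4 g c0 c1 c2 c3 c4"
  shows "(g \<longlongrightarrow> c0) (at 0)"
proof -
  obtain r where r: "(r \<longlongrightarrow> 0) (at 0)"
    and g: "\<And>h. h \<noteq> 0 \<Longrightarrow> g h = c0 + c1*h + c2*h^2 + c3*h^3 + c4*h^4 + h^4 * r h"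
    using jet4_remainderE[OF assms] by blast
  have "((\<lambda>h. c0 + c1*h + c2*h^2 + c3*h^3 + c4*h^4 + h^4 * r h) \<longlongrightarrow>
        c0 + c1*0 + c2*0^2 + c3*0^3 + c4*0^4 + 0^4 * 0) (at 0)"
    by (intro tendsto_intros r)
  moreover have "\<forall>\<^sub>F h in at 0. c0 + c1*h + c2*h^2 + c3*h^3 + c4*h^4 + h^4 * r h = g h"
    by (simp add: eventually_at_filter g)
  ultimately show ?thesis
    by (simp add: Lim_transform_eventually)
qed

lemma jet4_polynomial: "jet4 (\<lambda>h. c0 + c1*h + c2*h^2 + c3*h^3 + c4*h^4) c0 c1 c2 c3 c4"
  unfolding jet4_def by simp

lemma jet4_const: "jet4 (\<lambda>h. c) c 0 0 0 0"
  unfolding jet4_def by simp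

lemma jet4_ident: "jet4 (\<lambda>h. h) 0 1 0 0 0"
  unfolding jet4_def by simp

lemma jet4_add:
  assumes "jet4 f a0 a1 a2 a3 a4" "jet4 g b0 b1 b2 b3 b4"
  shows "jet4 (\<lambda>h. f h + g h) (a0+b0) (a1+b1) (a2+b2) (a3+b3) (a4+b4)"
proof -
  have "((\<lambda>h. (f h - (a0 + a1*h + a2*h^2 + a3*h^3 + a4*h^4)) / h^4 +
              (g h - (b0 + b1*h + b2*h^2 + b3*h^3 + b4*h^4)) / h^4) \<longlongrightarrow> 0 + 0) (at 0)"
    using assms unfolding jet4_def by (intro tendsto_add)
  then show ?thesis
    unfolding jet4_def by (simp add: add_divide_distrib[symmetric] algebra_simps)
qed

lemma jet4_cmult:
  assumes "jet4 g b0 b1 b2 b3 b4"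
  shows "jet4 (\<lambda>h. k * g h) (k*b0) (k*b1) (k*b2) (k*b3) (k*b4)"
proof -
  have "((\<lambda>h. k * ((g h - (b0 + b1*h + b2*h^2 + b3*h^3 + b4*h^4)) / h^4)) \<longlongrightarrow> k * 0) (at 0)"
    using assms unfolding jet4_def by (intro tendsto_mult tendsto_const)
  then show ?thesis
    unfolding jet4_def by (simp add: algebra_simps)
qed

lemma jet4_diff:
  assumes "jet4 f a0 a1 a2 a3 a4" "jet4 g b0 b1 b2 b3 b4"
  shows "jet4 (\<lambda>h. f h - g h) (a0-b0) (a1-b1) (a2-b2) (a3-b3) (a4-b4)"
  using jet4_add[OF assms(1) jet4_cmult[OF assms(2), of "-1"]] by simp

lemma jet4_mult:
  assumes "jet4 f a0 a1 a2 a3 a4" "jet4 g b0 b1 b2 b3 b4"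
  shows "jet4 (\<lambda>h. f h * g h) (a0*b0) (a0*b1 + a1*b0) (a0*b2 + a1*b1 + a2*b0)
           (a0*b3 + a1*b2 + a2*b1 + a3*b0) (a0*b4 + a1*b3 + a2*b2 + a3*b1 + a4*b0)"
proof -
  define P where "P h = a0 + a1*h + a2*h^2 + a3*h^3 + a4*h^4" for h :: real
  define Q where "Q h = b0 + b1*h + b2*h^2 + b3*h^3 + b4*h^4" for h :: real
  \<comment> \<open>the terms of degree 5 to 8 of P h * Q h, divided by h^5\<close>
  define H where "H h = (a1*b4 + a2*b3 + a3*b2 + a4*b1) + (a2*b4 + a3*b3 + a4*b2)*h
      + (a3*b4 + a4*b3)*h^2 + (a4*b4)*h^3" for h :: real
  obtain r where r: "(r \<longlongrightarrow> 0) (at 0)" and f: "\<And>h. h \<noteq> 0 \<Longrightarrow> f h = P h + h^4 * r h"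
    using assms(1) unfolding P_def by (rule jet4_remainderE) (simp add: add.assoc)
  obtain s where s: "(s \<longlongrightarrow> 0) (at 0)" and g: "\<And>h. h \<noteq> 0 \<Longrightarrow> g h = Q h + h^4 * s h"
    using assms(2) unfolding Q_def by (rule jet4_remainderE) (simp add: add.assoc)
  show ?thesis
  proof (rule jet4_remainderI)
    have "((\<lambda>h. h * H h + r h * Q h + s h * P h + h^4 * r h * s h) \<longlongrightarrow>
        0 * H 0 + 0 * Q 0 + 0 * P 0 + 0^4 * 0 * 0) (at 0)"
      unfolding H_def P_def Q_def by (intro tendsto_intros r s)
    then show "((\<lambda>h. h * H h + r h * Q h + s h * P h + h^4 * r h * s h) \<longlongrightarrow> 0) (at 0)"
      by simp
  next
    fix h :: real assume "h \<noteq> 0"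
    then show "f h * g h = a0*b0 + (a0*b1 + a1*b0)*h + (a0*b2 + a1*b1 + a2*b0)*h^2
        + (a0*b3 + a1*b2 + a2*b1 + a3*b0)*h^3 + (a0*b4 + a1*b3 + a2*b2 + a3*b1 + a4*b0)*h^4
        + h^4 * (h * H h + r h * Q h + s h * P h + h^4 * r h * s h)"
      by (simp add: f g P_def Q_def H_def) algebra
  qed
qed

lemma jet4_quotient_by_var:
  assumes "jet4 q 0 c1 c2 c3 c4"
  shows "((\<lambda>h. q h / h) \<longlongrightarrow> c1) (at 0)"
proof -
  obtain r where r: "(r \<longlongrightarrow> 0) (at 0)"
    and q: "\<And>h. h \<noteq> 0 \<Longrightarrow> q h = 0 + c1*h + c2*h^2 + c3*h^3 + c4*h^4 + h^4 * r h"
    using jet4_remainderE[OF assms] by blast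
  have "((\<lambda>h. c1 + c2*h + c3*h^2 + c4*h^3 + h^3 * r h) \<longlongrightarrow> c1 + c2*0 + c3*0^2 + c4*0^3 + 0^3*0) (at 0)"
    by (intro tendsto_intros r)
  moreover have "\<forall>\<^sub>F h in at 0. c1 + c2*h + c3*h^2 + c4*h^3 + h^3 * r h = q h / h"
    by (simp add: eventually_at_filter q field_simps power_numeral_reduce)
  ultimately show ?thesis
    by (simp add: Lim_transform_eventually)
qed

lemma jet4_inverse:
  assumes g: "jet4 g 1 c1 c2 c3 c4"
  shows "jet4 (\<lambda>h. 1 / g h) 1 (-c1) (c1^2 - c2) (2*c1*c2 - c3 - c1^3)
            (c2^2 + 2*c1*c3 - 3*c1^2*c2 + c1^4 - c4)"
proof -
  define P where "P h = 1 + (-c1)*h + (c1^2 - c2)*h^2 + (2*c1*c2 - c3 - c1^3)*h^3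
      + (c2^2 + 2*c1*c3 - 3*c1^2*c2 + c1^4 - c4)*h^4" for h
  have "jet4 P 1 (-c1) (c1^2 - c2) (2*c1*c2 - c3 - c1^3) (c2^2 + 2*c1*c3 - 3*c1^2*c2 + c1^4 - c4)"
    unfolding P_def by (rule jet4_polynomial)
  from jet4_mult[OF g this] have "jet4 (\<lambda>h. g h * P h) 1 0 0 0 0"
    by (rule jet4_cong) (simp_all add: algebra_simps power2_eq_square power3_eq_cube power4_eq_xxxx)
  then have "((\<lambda>h. (1 - g h * P h) / h^4) \<longlongrightarrow> 0) (at 0)"
    unfolding jet4_def by (auto dest: tendsto_minus simp: minus_divide_left)
  moreover have g1: "(g \<longlongrightarrow> 1) (at 0)"
    using jet4_tendsto[OF g] .
  ultimately have "((\<lambda>h. (1 - g h * P h) / h^4 / g h) \<longlongrightarrow> 0 / 1) (at 0)"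
    by (intro tendsto_intros) auto
  moreover have "\<forall>\<^sub>F h in at 0. (1 - g h * P h) / h^4 / g h = (1 / g h - P h) / h^4"
    using tendsto_imp_eventually_ne[OF g1 one_neq_zero] by eventually_elim (simp add: field_simps)
  ultimately show ?thesis
    unfolding jet4_def P_def by (simp add: Lim_transform_eventually)
qed

lemma jet4_divide:
  assumes f: "jet4 f a0 a1 a2 a3 a4" and g: "jet4 g 1 c1 c2 c3 c4"
  shows "jet4 (\<lambda>h. f h / g h) a0 (a1 - a0*c1) (a2 - a1*c1 + a0*(c1^2 - c2))
           (a3 - a2*c1 + a1*(c1^2 - c2) + a0*(2*c1*c2 - c3 - c1^3))
           (a4 - a3*c1 + a2*(c1^2 - c2) + a1*(2*c1*c2 - c3 - c1^3)
              + a0*(c2^2 + 2*c1*c3 - 3*c1^2*c2 + c1^4 - c4))"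
  using jet4_mult[OF f jet4_inverse[OF g]] by (rule jet4_cong) (simp_all add: algebra_simps)

lemma jet4_compose_even:
  assumes q: "jet4 q 0 c1 c2 c3 c4" and f: "jet4 f p0 0 p2 0 p4" and f0: "f 0 = p0"
  shows "jet4 (\<lambda>h. f (q h)) p0 0 (p2*c1^2) (2*p2*c1*c2) (p2*(c2^2 + 2*c1*c3) + p4*c1^4)"
proof -
  \<comment> \<open>\<open>r 0 = 0\<close> because \<open>x / 0 = 0\<close>; together with \<open>f 0 = p0\<close> this makes \<open>fr\<close> hold at 0 too\<close>
  define r where "r x = (f x - (p0 + p2*x^2 + p4*x^4)) / x^4" for x
  have fr: "f x = p0 + p2*x^2 + p4*x^4 + x^4 * r x" for x
    using f0 by (cases "x = 0") (simp_all add: r_def)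
  have "isCont r 0"
    using f unfolding isCont_def jet4_def r_def[abs_def] by simp
  moreover have "r 0 = 0"
    by (simp add: r_def)
  ultimately have rq: "((\<lambda>h. r (q h)) \<longlongrightarrow> 0) (at 0)"
    using isCont_tendsto_compose[OF _ jet4_tendsto[OF q]] by metis
  have q2: "jet4 (\<lambda>h. q h * q h) 0 0 (c1*c1) (c1*c2 + c2*c1) (c1*c3 + c2*c2 + c3*c1)"
    using jet4_mult[OF q q] by simp
  have q4: "jet4 (\<lambda>h. q h * q h * (q h * q h)) 0 0 0 0 (c1*c1*(c1*c1))"
    using jet4_mult[OF q2 q2] by simp
  have "((\<lambda>h. (q h / h)^4 * r (q h)) \<longlongrightarrow> c1^4 * 0) (at 0)"
    by (intro tendsto_intros jet4_quotient_by_var[OF q] rq)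
  then have rem: "jet4 (\<lambda>h. q h ^ 4 * r (q h)) 0 0 0 0 0"
    unfolding jet4_def by (simp add: power_divide)
  have "jet4 (\<lambda>h. p0 + p2 * (q h * q h) + p4 * (q h * q h * (q h * q h)) + q h ^ 4 * r (q h))
     (p0 + p2*0 + p4*0 + 0) (0 + p2*0 + p4*0 + 0) (0 + p2*(c1*c1) + p4*0 + 0)
     (0 + p2*(c1*c2 + c2*c1) + p4*0 + 0) (0 + p2*(c1*c3 + c2*c2 + c3*c1) + p4*(c1*c1*(c1*c1)) + 0)"
    by (intro jet4_add jet4_cmult jet4_const q2 q4 rem)
  then show ?thesis
    by (rule jet4_cong)
      (simp_all add: fr power2_eq_square power4_eq_xxxx algebra_simps)
qed

lemma polynomial_coeffs_zero_if_little_o: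
  fixes e :: "nat \<Rightarrow> real"
  assumes "((\<lambda>h. (\<Sum>i\<le>n. e i * h^i) / h^n) \<longlongrightarrow> 0) (at 0)" and "i \<le> n"
  shows "e i = 0"
  using assms
proof (induction n arbitrary: e i)
  have constant_coeff: "e 0 = 0"
    if lim: "((\<lambda>h. (\<Sum>i\<le>n. e i * h^i) / h^n) \<longlongrightarrow> 0) (at 0)" for n and e :: "nat \<Rightarrow> real"
  proof -
    have "((\<lambda>h. h^n * ((\<Sum>i\<le>n. e i * h^i) / h^n)) \<longlongrightarrow> 0^n * 0) (at 0)"
      by (intro tendsto_intros lim)
    moreover have "\<forall>\<^sub>F h in at 0. h^n * ((\<Sum>i\<le>n. e i * h^i) / h^n) = (\<Sum>i\<le>n. e i * h^i)"
      by (simp add: eventually_at_filter)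
    ultimately have "((\<lambda>h. \<Sum>i\<le>n. e i * h^i) \<longlongrightarrow> 0) (at 0)"
      by (simp add: Lim_transform_eventually)
    moreover have "((\<lambda>h. \<Sum>i\<le>n. e i * h^i) \<longlongrightarrow> (\<Sum>i\<le>n. e i * 0^i)) (at 0)"
      by (intro tendsto_intros)
    moreover have "(\<Sum>i\<le>n. e i * 0^i) = e 0"
      by (induction n) auto
    ultimately show "e 0 = 0"
      using tendsto_unique[OF at_neq_bot] by metis
  qed
  {
    case 0
    then show ?case using constant_coeff by blast
  next
    case (Suc n)
    then have e0: "e 0 = 0" using constant_coeff by blast
    have shift: "(\<Sum>i\<le>Suc n. e i * h^i) = h * (\<Sum>i\<le>n. e (Suc i) * h^i)" for h :: real
      by (simp only: sum.atMost_Suc_shift e0) (simp add: sum_distrib_left mult_ac)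
    have "\<forall>\<^sub>F h in at 0. (\<Sum>i\<le>Suc n. e i * h^i) / h^Suc n = (\<Sum>i\<le>n. e (Suc i) * h^i) / h^n"
      unfolding shift by (simp add: eventually_at_filter del: sum.atMost_Suc)
    then have "((\<lambda>h. (\<Sum>i\<le>n. e (Suc i) * h^i) / h^n) \<longlongrightarrow> 0) (at 0)"
      using Suc.prems(1) by (rule Lim_transform_eventually[rotated])
    then show ?case
      using Suc.IH[of "\<lambda>i. e (Suc i)"] Suc.prems(2) e0 by (cases i) auto
  }
qed

lemma jet4_unique:
  assumes "jet4 g c0 c1 c2 c3 c4" "jet4 g d0 d1 d2 d3 d4"
  shows "c0 = d0 \<and> c1 = d1 \<and> c2 = d2 \<and> c3 = d3 \<and> c4 = d4"
proof -
  define e where "e = nth [d0 - c0, d1 - c1, d2 - c2, d3 - c3, d4 - c4]"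
  from jet4_diff[OF assms] have lim: "((\<lambda>h. (\<Sum>i\<le>4. e i * h^i) / h^4) \<longlongrightarrow> 0) (at 0)"
    unfolding jet4_def by (simp add: e_def eval_nat_numeral algebra_simps)
  have "e i = 0" if "i \<le> 4" for i
    using polynomial_coeffs_zero_if_little_o[OF lim that] .
  from this[of 0] this[of 1] this[of 2] this[of 3] this[of 4] show ?thesis
    by (simp add: e_def)
qed

text \<open>By homogeneity \<open>P (x - t) (x + t) = x * profile P (t / x)\<close>, so the expansion of \<open>P\<close> at
  infinity is a Taylor expansion of its profile at 0; \<open>mean_of_profile\<close> recovers a homogeneous
  mean from its profile.\<close>

definition profile :: "(real \<Rightarrow> real \<Rightarrow> real) \<Rightarrow> real \<Rightarrow> real" where
  "profile P x = P (1 - x) (1 + x)"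

definition mean_of_profile :: "(real \<Rightarrow> real) \<Rightarrow> real \<Rightarrow> real \<Rightarrow> real" where
  "mean_of_profile f u v = (u + v) / 2 * f ((v - u) / (u + v))"

lemma homogeneous_mean_eq_mean_of_profile:
  assumes "homogeneous_mean P" "u > 0" "v > 0"
  shows "P u v = mean_of_profile (profile P) u v"
proof -
  define l where "l = (u + v) / 2"
  define x where "x = (v - u) / (u + v)"
  have "l > 0" "l * (1 - x) = u" "l * (1 + x) = v"
    using assms(2,3) by (simp_all add: l_def x_def field_simps)
  moreover have "1 - x > 0" "1 + x > 0"
    using assms(2,3) by (simp_all add: x_def field_simps)
  ultimately have "P u v = l * P (1 - x) (1 + x)"
    using assms(1) unfolding homogeneous_mean_def by metis
  then show ?thesis
    by (simp add: mean_of_profile_def profile_def l_def x_def)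
qed

lemma mean_profile_bounds:
  assumes "is_mean P" "\<bar>x\<bar> < 1"
  shows "1 - \<bar>x\<bar> \<le> profile P x" "profile P x \<le> 1 + \<bar>x\<bar>"
proof -
  have "min (1 - x) (1 + x) \<le> profile P x \<and> profile P x \<le> max (1 - x) (1 + x)"
    using assms unfolding is_mean_def profile_def by simp
  then show "1 - \<bar>x\<bar> \<le> profile P x" "profile P x \<le> 1 + \<bar>x\<bar>"
    by (simp_all add: min_def max_def abs_if split: if_splits)
qed

lemma mean_profile_tendsto: "is_mean P \<Longrightarrow> (profile P \<longlongrightarrow> 1) (at 0)"
proof (rule real_tendsto_sandwich[of "\<lambda>x. 1 - \<bar>x\<bar>" _ _ "\<lambda>x. 1 + \<bar>x\<bar>"])
  assume "is_mean P"
  moreover have "\<forall>\<^sub>F x in at (0::real). \<bar>x\<bar> < 1"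
    unfolding eventually_at by (auto simp: dist_real_def intro: exI[of _ 1])
  ultimately show "\<forall>\<^sub>F x in at 0. 1 - \<bar>x\<bar> \<le> profile P x" "\<forall>\<^sub>F x in at 0. profile P x \<le> 1 + \<bar>x\<bar>"
    by (auto elim: eventually_mono intro: mean_profile_bounds)
  show "((\<lambda>x. 1 - \<bar>x\<bar>) \<longlongrightarrow> 1) (at (0::real))" "((\<lambda>x. 1 + \<bar>x\<bar>) \<longlongrightarrow> 1) (at (0::real))"
    by (auto intro!: tendsto_eq_intros)
qed

lemma mean_profile_zero: "is_mean P \<Longrightarrow> profile P 0 = 1"
  using mean_profile_bounds[of P 0] by simp

lemma symmetric_mean_profile_even:
  "symmetric_mean P \<Longrightarrow> \<bar>x\<bar> < 1 \<Longrightarrow> profile P (- x) = profile P x"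
  unfolding symmetric_mean_def profile_def by auto

lemma sym_asymp_expansion_profile_at_right:
  assumes hom: "homogeneous_mean P" and ex: "sym_asymp_expansion P c"
  shows "((\<lambda>x. (profile P x - (c 0 + c 1 * x^2 + c 2 * x^4)) / x^4) \<longlongrightarrow> 0) (at_right 0)"
proof -
  have "(\<lambda>y. P (y - 1) (y + 1) - (\<Sum>n\<le>2. c n * 1 ^ (2 * n) * y powr (1 - 2 * real n)))
      \<in> o[at_top](\<lambda>y. y powr (1 - 2 * real (2::nat)))"
    using ex unfolding sym_asymp_expansion_def by blast
  from filterlim_compose[OF smalloD_tendsto[OF this] filterlim_inverse_at_top_right]
  have lim: "((\<lambda>x. (P (inverse x - 1) (inverse x + 1)
        - (\<Sum>n\<le>2. c n * 1 ^ (2 * n) * inverse x powr (1 - 2 * real n)))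
      / inverse x powr (1 - 2 * real (2::nat))) \<longlongrightarrow> 0) (at_right 0)"
    by (simp add: o_def)
  \<comment> \<open>substituting y = 1/x turns the expansion at infinity into one of the profile near 0\<close>
  have eq: "(P (inverse x - 1) (inverse x + 1)
        - (\<Sum>n\<le>2. c n * 1 ^ (2 * n) * inverse x powr (1 - 2 * real n)))
      / inverse x powr (1 - 2 * real (2::nat))
      = (profile P x - (c 0 + c 1 * x^2 + c 2 * x^4)) / x^4" if x: "0 < x" "x < 1" for x
  proof -
    have "inverse x * (1 - x) = inverse x - 1" "inverse x * (1 + x) = inverse x + 1"
      using x by (simp_all add: field_simps)
    moreover have "P (inverse x * (1 - x)) (inverse x * (1 + x)) = inverse x * P (1 - x) (1 + x)"
      using hom x unfolding homogeneous_mean_def by simp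
    ultimately have P: "P (inverse x - 1) (inverse x + 1) = inverse x * profile P x"
      by (simp add: profile_def)
    have S: "(\<Sum>n\<le>2. c n * 1 ^ (2 * n) * inverse x powr (1 - 2 * real n)) =
        inverse x * (c 0 + c 1 * x^2 + c 2 * x^4)"
      using x by (simp add: eval_nat_numeral powr_minus powr_neg_numeral field_simps)
    have W: "inverse x powr (1 - 2 * real (2::nat)) = inverse x * x^4"
      using x by (simp add: powr_neg_numeral field_simps eval_nat_numeral)
    show ?thesis
      unfolding P S W using x by (simp add: field_simps)
  qed
  have "\<forall>\<^sub>F x in at_right 0. 0 < x \<and> x < (1::real)"
    unfolding eventually_at_right_field by (auto intro: exI[of _ 1])
  then have "\<forall>\<^sub>F x in at_right 0. (P (inverse x - 1) (inverse x + 1)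
        - (\<Sum>n\<le>2. c n * 1 ^ (2 * n) * inverse x powr (1 - 2 * real n)))
      / inverse x powr (1 - 2 * real (2::nat))
      = (profile P x - (c 0 + c 1 * x^2 + c 2 * x^4)) / x^4"
    by eventually_elim (rule eq; simp)
  with lim show ?thesis
    by (rule Lim_transform_eventually)
qed

lemma mean_profile_jet4:
  assumes mean: "is_mean P" and sym: "symmetric_mean P" and hom: "homogeneous_mean P"
    and ex: "sym_asymp_expansion P c"
  shows "jet4 (profile P) 1 0 (c 1) 0 (c 2)"
proof -
  define R where "R x = (profile P x - (c 0 + c 1 * x^2 + c 2 * x^4)) / x^4" for x
  have right: "(R \<longlongrightarrow> 0) (at_right 0)"
    unfolding R_def using sym_asymp_expansion_profile_at_right[OF hom ex] .
  have small: "\<forall>\<^sub>F x in at_right 0. 0 < x \<and> x < (1::real)"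
    unfolding eventually_at_right_field by (auto intro: exI[of _ 1])
  have "((\<lambda>x. c 0 + c 1 * x^2 + c 2 * x^4 + x^4 * R x) \<longlongrightarrow> c 0 + c 1 * 0^2 + c 2 * 0^4 + 0^4 * 0) (at_right 0)"
    by (intro tendsto_intros right)
  moreover have "\<forall>\<^sub>F x in at_right 0. c 0 + c 1 * x^2 + c 2 * x^4 + x^4 * R x = profile P x"
    using small by eventually_elim (simp add: R_def)
  ultimately have "(profile P \<longlongrightarrow> c 0) (at_right 0)"
    by (simp add: Lim_transform_eventually)
  moreover have "(profile P \<longlongrightarrow> 1) (at_right 0)"
    using mean_profile_tendsto[OF mean] by (rule tendsto_mono[OF at_le, rotated]) simp
  ultimately have c0: "c 0 = 1"
    using tendsto_unique[OF trivial_limit_at_right_real] by metis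
  have "\<forall>\<^sub>F x in at_right 0. R x = R (- x)"
    using small by eventually_elim (simp add: R_def symmetric_mean_profile_even[OF sym])
  with right have "((\<lambda>x. R (- x)) \<longlongrightarrow> 0) (at_right (- 0))"
    by (simp add: Lim_transform_eventually)
  then have "(R \<longlongrightarrow> 0) (at_left 0)"
    by (simp add: filterlim_at_left_to_right[of R])
  then have "(R \<longlongrightarrow> 0) (at 0)"
    using right by (rule filterlim_split_at)
  then show ?thesis
    unfolding jet4_def R_def c0 by simp
qed

lemma mean_of_profile_halves:
  "mean_of_profile f u v = (u + v) / 2 * f ((v - u) / 2 / ((u + v) / 2))"
proof -
  have "(v - u) / 2 / ((u + v) / 2) = (v - u) / (u + v)"
    by (cases "u + v = 0") (simp_all add: field_simps)
  then show ?thesis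
    by (simp only: mean_of_profile_def)
qed

lemma stabilized_profile_equation:
  assumes homK: "homogeneous_mean K" and meanN: "is_mean N" and homN: "homogeneous_mean N"
    and meanM: "is_mean M" and stab: "stabilized K N M"
  shows "\<forall>\<^sub>F h in at 0. profile M h = mean_of_profile (profile K)
      (mean_of_profile (profile N) (1 - h) (profile M h))
      (mean_of_profile (profile N) (profile M h) (1 + h))"
proof -
  have "\<forall>\<^sub>F h in at (0::real). \<bar>h\<bar> < 1"
    unfolding eventually_at by (auto simp: dist_real_def intro: exI[of _ 1])
  then show ?thesis
  proof eventually_elim
    case (elim h)
    then have u: "1 - h > 0" and v: "1 + h > 0" by auto
    define m where "m = M (1 - h) (1 + h)"
    have m: "m > 0"
      using meanM u v unfolding is_mean_def m_def by simp
    have X: "N (1 - h) m > 0" and Y: "N m (1 + h) > 0"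
      using meanN u v m unfolding is_mean_def by simp_all
    have "m = K (N (1 - h) m) (N m (1 + h))"
      using stab u v unfolding stabilized_def m_def by simp
    also have "\<dots> = mean_of_profile (profile K)
        (mean_of_profile (profile N) (1 - h) m) (mean_of_profile (profile N) m (1 + h))"
      using homogeneous_mean_eq_mean_of_profile[OF homK X Y]
        homogeneous_mean_eq_mean_of_profile[OF homN u m]
        homogeneous_mean_eq_mean_of_profile[OF homN m v]
      by simp
    finally show ?case
      by (simp add: profile_def m_def)
  qed
qed

lemma jet4_mean_of_profile_left:
  assumes f: "jet4 f 1 0 n1 0 n2" "f 0 = 1" and m: "jet4 m 1 0 a 0 b"
  shows "jet4 (\<lambda>h. mean_of_profile f (1 - h) (m h)) 1 (-1/2) (n1/4 + a/2) (n1/8 + a*n1/2)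
      (n2/16 + n1/16 + b/2 + a*n1/8 + a^2*n1/4)"
proof -
  have u: "jet4 (\<lambda>h. 1 - h) 1 (-1) 0 0 0"
    using jet4_diff[OF jet4_const jet4_ident] by simp
  have A: "jet4 (\<lambda>h. (1 - h + m h) / 2) 1 (-1/2) (a/2) 0 (b/2)"
    using jet4_cmult[OF jet4_add[OF u m], of "1/2"] by (rule jet4_cong) simp_all
  have D: "jet4 (\<lambda>h. (m h - (1 - h)) / 2) 0 (1/2) (a/2) 0 (b/2)"
    using jet4_cmult[OF jet4_diff[OF m u], of "1/2"] by (rule jet4_cong) simp_all
  have q: "jet4 (\<lambda>h. (m h - (1 - h)) / 2 / ((1 - h + m h) / 2)) 0 (1/2) (1/4 + a/2) (1/8)
      (1/16 + b/2 - a/8 - a^2/4)"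
    using jet4_divide[OF D A]
    by (rule jet4_cong) (simp_all add: field_simps power2_eq_square power3_eq_cube power4_eq_xxxx)
  have F: "jet4 (\<lambda>h. f ((m h - (1 - h)) / 2 / ((1 - h + m h) / 2))) 1 0 (n1/4) (n1/4 + a*n1/2)
      (n2/16 + 3*n1/16 + a*n1/4 + a^2*n1/4)"
    using jet4_compose_even[OF q f]
    by (rule jet4_cong) (simp_all add: field_simps power2_eq_square power3_eq_cube power4_eq_xxxx)
  show ?thesis
    unfolding mean_of_profile_halves
    using jet4_mult[OF A F]
    by (rule jet4_cong) (simp_all add: field_simps power2_eq_square power3_eq_cube power4_eq_xxxx)
qed

lemma jet4_mean_of_profile_right:
  assumes f: "jet4 f 1 0 n1 0 n2" "f 0 = 1" and m: "jet4 m 1 0 a 0 b"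
  shows "jet4 (\<lambda>h. mean_of_profile f (m h) (1 + h)) 1 (1/2) (n1/4 + a/2) (- n1/8 - a*n1/2)
      (n2/16 + n1/16 + b/2 + a*n1/8 + a^2*n1/4)"
proof -
  have v: "jet4 (\<lambda>h. 1 + h) 1 1 0 0 0"
    using jet4_add[OF jet4_const jet4_ident] by simp
  have A: "jet4 (\<lambda>h. (m h + (1 + h)) / 2) 1 (1/2) (a/2) 0 (b/2)"
    using jet4_cmult[OF jet4_add[OF m v], of "1/2"] by (rule jet4_cong) simp_all
  have D: "jet4 (\<lambda>h. (1 + h - m h) / 2) 0 (1/2) (-a/2) 0 (-b/2)"
    using jet4_cmult[OF jet4_diff[OF v m], of "1/2"] by (rule jet4_cong) simp_all
  have q: "jet4 (\<lambda>h. (1 + h - m h) / 2 / ((m h + (1 + h)) / 2)) 0 (1/2) (-1/4 - a/2) (1/8)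
      (-1/16 - b/2 + a/8 + a^2/4)"
    using jet4_divide[OF D A]
    by (rule jet4_cong) (simp_all add: field_simps power2_eq_square power3_eq_cube power4_eq_xxxx)
  have F: "jet4 (\<lambda>h. f ((1 + h - m h) / 2 / ((m h + (1 + h)) / 2))) 1 0 (n1/4) (- n1/4 - a*n1/2)
      (n2/16 + 3*n1/16 + a*n1/4 + a^2*n1/4)"
    using jet4_compose_even[OF q f]
    by (rule jet4_cong) (simp_all add: field_simps power2_eq_square power3_eq_cube power4_eq_xxxx)
  show ?thesis
    unfolding mean_of_profile_halves
    using jet4_mult[OF A F]
    by (rule jet4_cong) (simp_all add: field_simps power2_eq_square power3_eq_cube power4_eq_xxxx)
qed

lemma stabilized_profile_coeffs:
  assumes fK: "jet4 fK 1 0 k1 0 k2" "fK 0 = 1" and fN: "jet4 fN 1 0 n1 0 n2" "fN 0 = 1"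
    and m: "jet4 m 1 0 a 0 b"
    and eq: "\<forall>\<^sub>F h in at 0. m h = mean_of_profile fK
      (mean_of_profile fN (1 - h) (m h)) (mean_of_profile fN (m h) (1 + h))"
  shows "2*a = k1 + n1" "8*b = n2 + n1 + k2 - 3*k1*n1 + 2*a*n1 - 2*a*k1 - 8*a*k1*n1 + 4*a^2*n1"
proof -
  define X where "X h = mean_of_profile fN (1 - h) (m h)" for h
  define Y where "Y h = mean_of_profile fN (m h) (1 + h)" for h
  have X: "jet4 X 1 (-1/2) (n1/4 + a/2) (n1/8 + a*n1/2) (n2/16 + n1/16 + b/2 + a*n1/8 + a^2*n1/4)"
    unfolding X_def[abs_def] using fN m by (rule jet4_mean_of_profile_left)
  have Y: "jet4 Y 1 (1/2) (n1/4 + a/2) (- n1/8 - a*n1/2) (n2/16 + n1/16 + b/2 + a*n1/8 + a^2*n1/4)"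
    unfolding Y_def[abs_def] using fN m by (rule jet4_mean_of_profile_right)
  have A: "jet4 (\<lambda>h. (X h + Y h) / 2) 1 0 (n1/4 + a/2) 0
      (n2/16 + n1/16 + b/2 + a*n1/8 + a^2*n1/4)"
    using jet4_cmult[OF jet4_add[OF X Y], of "1/2"] by (rule jet4_cong) (simp_all add: field_simps)
  have D: "jet4 (\<lambda>h. (Y h - X h) / 2) 0 (1/2) 0 (- n1/8 - a*n1/2) 0"
    using jet4_cmult[OF jet4_diff[OF Y X], of "1/2"] by (rule jet4_cong) (simp_all add: field_simps)
  have q: "jet4 (\<lambda>h. (Y h - X h) / 2 / ((X h + Y h) / 2)) 0 (1/2) 0 (- n1/4 - a/4 - a*n1/2) 0"
    using jet4_divide[OF D A] by (rule jet4_cong) (simp_all add: field_simps power2_eq_square)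
  have F: "jet4 (\<lambda>h. fK ((Y h - X h) / 2 / ((X h + Y h) / 2))) 1 0 (k1/4) 0
      (k2/16 - k1*n1/4 - a*k1/4 - a*k1*n1/2)"
    using jet4_compose_even[OF q fK]
    by (rule jet4_cong) (simp_all add: field_simps power2_eq_square power4_eq_xxxx)
  have "jet4 (\<lambda>h. mean_of_profile fK (X h) (Y h)) 1 0 (n1/4 + k1/4 + a/2) 0
      (n2/16 + n1/16 + k2/16 - 3*k1*n1/16 + b/2 + a*n1/8 - a*k1/8 - a*k1*n1/2 + a^2*n1/4)"
    unfolding mean_of_profile_halves
    using jet4_mult[OF A F] by (rule jet4_cong) (simp_all add: field_simps power2_eq_square)
  moreover have "jet4 (\<lambda>h. mean_of_profile fK (X h) (Y h)) 1 0 a 0 b"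
    using jet4_cong[OF m eq[folded X_def Y_def]] by simp
  ultimately have coeff2: "a = n1/4 + k1/4 + a/2"
    and coeff4: "b = n2/16 + n1/16 + k2/16 - 3*k1*n1/16 + b/2 + a*n1/8 - a*k1/8 - a*k1*n1/2 + a^2*n1/4"
    using jet4_unique by blast+
  from coeff2 show "2*a = k1 + n1"
    by simp
  from coeff4 show "8*b = n2 + n1 + k2 - 3*k1*n1 + 2*a*n1 - 2*a*k1 - 8*a*k1*n1 + 4*a^2*n1"
    by (simp add: field_simps)
qed

lemma stable_mean_coeffs:
  assumes "is_mean P" "symmetric_mean P" "homogeneous_mean P" "stable_mean P"
    and "sym_asymp_expansion P c"
  shows "6 * c 2 = c 1 * (1 + c 1) * (1 - 4 * c 1)"
proof -
  have "stabilized P P P"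
    using assms(4) unfolding stable_mean_def stabilized_def by blast
  have jet: "jet4 (profile P) 1 0 (c 1) 0 (c 2)"
    using mean_profile_jet4[OF assms(1-3,5)] .
  note zero = mean_profile_zero[OF assms(1)]
  from stabilized_profile_coeffs(2)[OF jet zero jet zero jet
      stabilized_profile_equation[OF assms(3,1,3,1) \<open>stabilized P P P\<close>]]
  show ?thesis
    by (simp add: algebra_simps power2_eq_square)
qed

lemma stabilization_coeffs_cases:
  fixes a b k1 k2 n1 n2 :: real
  assumes "2*a = k1 + n1"
    and KN: "8*b = n2 + n1 + k2 - 3*k1*n1 + 2*a*n1 - 2*a*k1 - 8*a*k1*n1 + 4*a^2*n1"
    and NK: "8*b = k2 + k1 + n2 - 3*n1*k1 + 2*a*k1 - 2*a*n1 - 8*a*n1*k1 + 4*a^2*k1"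
    and K: "6*k2 = k1*(1 + k1)*(1 - 4*k1)" and N: "6*n2 = n1*(1 + n1)*(1 - 4*n1)"
  shows "(k1 = n1 \<and> a = k1 \<and> a = n1 \<and> b = 1/6 * a * (1 + a) * (1 - 4 * a))
       \<or> (k1 + n1 = -1 \<and> a = -1/2 \<and> b = -1/8)"
proof -
  have "(n1 - k1) * (2*a + 1)^2 = 0"
    using KN NK by algebra
  then consider "n1 = k1" | "a = -1/2"
    by fastforce
  then show ?thesis
  proof cases
    case 1
    with \<open>2*a = k1 + n1\<close> have "a = k1" by simp
    with 1 KN K N have "b = 1/6 * a * (1 + a) * (1 - 4 * a)"
      by (simp add: field_simps power2_eq_square power3_eq_cube)
    with 1 \<open>a = k1\<close> show ?thesis by simp
  next
    case 2
    with \<open>2*a = k1 + n1\<close> have n1: "n1 = -1 - k1" by simp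
    have "b = -1/8"
      using KN K N unfolding 2 n1 by (simp add: field_simps power2_eq_square power3_eq_cube)
    with 2 n1 show ?thesis by simp
  qed
qed

theorem mainTheorem10:
  fixes K N M :: "real \<Rightarrow> real \<Rightarrow> real" and aK aN aM :: "nat \<Rightarrow> real"
  assumes "is_mean K" "symmetric_mean K" "homogeneous_mean K" "stable_mean K"
      and "is_mean N" "symmetric_mean N" "homogeneous_mean N" "stable_mean N"
      and "is_mean M" "symmetric_mean M" "homogeneous_mean M"
      and "sym_asymp_expansion K aK" "sym_asymp_expansion N aN" "sym_asymp_expansion M aM"
      and "stabilized K N M" "stabilized N K M"
  shows "(aK 1 = aN 1 \<and> aM 1 = aK 1 \<and> aM 1 = aN 1 \<and>
            aM 2 = 1/6 * aM 1 * (1 + aM 1) * (1 - 4 * aM 1))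
       \<or> (aK 1 + aN 1 = -1 \<and> aM 1 = -1/2 \<and> aM 2 = -1/8)"
proof -
  have K: "jet4 (profile K) 1 0 (aK 1) 0 (aK 2)" "profile K 0 = 1"
    using mean_profile_jet4[OF assms(1-3,12)] mean_profile_zero[OF assms(1)] by simp_all
  have N: "jet4 (profile N) 1 0 (aN 1) 0 (aN 2)" "profile N 0 = 1"
    using mean_profile_jet4[OF assms(5-7,13)] mean_profile_zero[OF assms(5)] by simp_all
  have M: "jet4 (profile M) 1 0 (aM 1) 0 (aM 2)"
    using mean_profile_jet4[OF assms(9-11,14)] .
  note KN = stabilized_profile_coeffs[OF K N M stabilized_profile_equation[OF assms(3,5,7,9,15)]]
  note NK = stabilized_profile_coeffs[OF N K M stabilized_profile_equation[OF assms(7,1,3,9,16)]]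
  show ?thesis
    using stabilization_coeffs_cases[OF KN(1) KN(2) NK(2)]
      stable_mean_coeffs[OF assms(1-4,12)] stable_mean_coeffs[OF assms(5-8,13)]
    by (simp add: algebra_simps)
qed

end
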